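(* Assume (A1)–(A6) and that the numerical integrator $\Psi$ has order $p\ge1$ in $X$ for the problems $v'(s)=f(t_n+s,v(s))$ and $z'(s)=f(t_n+\frac k2+s,z(s))$. Let $\overline w_n$ be the generalized solution of $\overline w_n'=A\overline w_n$, $\overline w_n(0)=\Psi_{k/2}^{f,t_n}(u(t_n))$, $\partial\overline w_n(s)=\partial\big(u(t_n)+\frac k2 f(t_n,u(t_n))+sAu(t_n)\big)$, and let $\overline u_{n+1}=\Psi_{k/2}^{f,t_n+k/2}(\overline w_n(k))$ (one step of the modified exponential Strang method started from the exact value). Then the local error satisfies $$\rho_{n+1}:=\overline u_{n+1}-u(t_{n+1})=O(k^2).$$
   Context: Let $X,Y$ be Banach spaces, $T>0$, $A:D(A)\subset X\to X$ and $\partial:D(A)\to Y$ linear operators, $f:[0,T]\times X\to X$, $g:[0,T]\to Y$, and let $u$ be the solution of $u'(t)=Au(t)+f(t,u(t))$, $u(0)=u_0$, $\partial u(t)=g(t)$, $0\le t\le T$. Standing hypotheses: (A1) $\partial$ is onto. (A2) $\ker\partial$ is dense in $X$ and the restriction $A_0$ of $A$ to $D(A_0)=\ker\partial$ generates a $C_0$-semigroup $(e^{tA_0})_{t\ge0}$ on $X$ of negative type $\omega$. (A3) For every $z\in\mathbb C$ with $\Re z>\omega$ and $v\in Y$, the problem $Ax=zx$, $\partial x=v$ has a unique solution $x=:K(z)v\in D(A)$, and $\|K(z)v\|\le C\|v\|$ with $C$ uniform for $\Re z\ge\omega_0>\omega$. (A4) $f\in C^1([0,T]\times X,X)$. (A5)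 $u\in C^2([0,T],X)$, $u(t)\in D(A^2)$ for all $t$, and $Au,A^2u\in C^1([0,T],X)$. (A6) $f(t,u(t))\in D(A)$ for all $t$ and $Af(\cdot,u(\cdot))\in C([0,T],X)$. Generalized solution: for $u_0\in X$, $v_0,v_1\in Y$, the generalized solution of $w'(s)=Aw(s)$, $w(0)=u_0$, $\partial w(s)=v_0+v_1s$ is $w(s)=e^{sA_0}(u_0-K(0)v_0)+K(0)(v_0+v_1s)-\int_0^s e^{\sigma A_0}K(0)v_1\,d\sigma$. Time step $k>0$, $t_n=nk$. For $\tau\in[0,T]$, $\Psi_k^{f,\tau}(v_0)$ denotes one step of size $k$ of a numerical integrator applied to $v'(s)=f(\tau+s,v(s))$, $v(0)=v_0$; order $p$ means $\Psi_k^{f,\tau}(v_0)-v(k)=O(k^{p+1})$ uniformly for the arguments considered. Notation $a=O(b)$ means $\|a\|\le Cb$ with $C$ independent of $k$ (small enough) and of $n$ with $0\le nk\le T$. *)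

theory Defs
  imports "HOL-Analysis.Analysis"
begin

definition linear_on :: "'a::real_vector set \<Rightarrow> ('a \<Rightarrow> 'b::real_vector) \<Rightarrow> bool" where
  "linear_on D L \<longleftrightarrow> subspace D \<and>
     (\<forall>x\<in>D. \<forall>y\<in>D. L (x + y) = L x + L y) \<and> (\<forall>c. \<forall>x\<in>D. L (c *\<^sub>R x) = c *\<^sub>R L x)"

definition C0_semigroup :: "(real \<Rightarrow> 'a::real_normed_vector \<Rightarrow> 'a) \<Rightarrow> bool" where
  "C0_semigroup S \<longleftrightarrow> S 0 = id \<and> (\<forall>t\<ge>0. bounded_linear (S t)) \<and>
     (\<forall>t s. t \<ge> 0 \<longrightarrow> s \<ge> 0 \<longrightarrow> S (t + s) = S t \<circ> S s) \<and>
     (\<forall>x. ((\<lambda>t. S t x) \<longlongrightarrow> x) (at_right 0))"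

definition generates :: "'a::real_normed_vector set \<Rightarrow> ('a \<Rightarrow> 'a) \<Rightarrow> (real \<Rightarrow> 'a \<Rightarrow> 'a) \<Rightarrow> bool" where
  "generates D B S \<longleftrightarrow> C0_semigroup S \<and>
     D = {x. \<exists>y. ((\<lambda>h. (1 / h) *\<^sub>R (S h x - x)) \<longlongrightarrow> y) (at_right 0)} \<and>
     (\<forall>x\<in>D. ((\<lambda>h. (1 / h) *\<^sub>R (S h x - x)) \<longlongrightarrow> B x) (at_right 0))"

definition negative_type :: "(real \<Rightarrow> 'a::real_normed_vector \<Rightarrow> 'a) \<Rightarrow> real \<Rightarrow> bool" where
  "negative_type S \<omega> \<longleftrightarrow> \<omega> < 0 \<and> (\<exists>M. \<forall>t\<ge>0. onorm (S t) \<le> M * exp (\<omega> * t))"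

definition C1_on :: "real set \<Rightarrow> (real \<Rightarrow> 'a::real_normed_vector) \<Rightarrow> bool" where
  "C1_on S g \<longleftrightarrow> (\<exists>g'. (\<forall>t\<in>S. (g has_vector_derivative g' t) (at t within S)) \<and> continuous_on S g')"

text \<open>Generalized solution of w' = A w, w(0) = u0, \<partial> w(s) = v0 + v1 s.\<close>
definition gen_sol :: "(real \<Rightarrow> 'a::banach \<Rightarrow> 'a) \<Rightarrow> (real \<Rightarrow> 'b \<Rightarrow> 'a) \<Rightarrow> 'a \<Rightarrow> 'b \<Rightarrow> 'b::real_vector \<Rightarrow> real \<Rightarrow> 'a" where
  "gen_sol S K u0 v0 v1 s = S s (u0 - K 0 v0) + K 0 (v0 + s *\<^sub>R v1)
      - integral {0..s} (\<lambda>\<sigma>. S \<sigma> (K 0 v1))"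

definition order_step :: "(real \<Rightarrow> 'a::real_normed_vector \<Rightarrow> 'a) \<Rightarrow> (real \<Rightarrow> real \<Rightarrow> 'a \<Rightarrow> 'a)
     \<Rightarrow> nat \<Rightarrow> real \<Rightarrow> real \<Rightarrow> real \<Rightarrow> 'a \<Rightarrow> bool" where
  "order_step f Psi p C h \<tau> v0 \<longleftrightarrow> (\<exists>v. v 0 = v0 \<and>
     (\<forall>s\<in>{0..h}. (v has_vector_derivative f (\<tau> + s) (v s)) (at s within {0..h})) \<and>
     norm (Psi h \<tau> v0 - v h) \<le> C * h ^ (p + 1))"

end

theory Submission
  imports Defs
begin

(*
  The exact solution satisfies u (t + k) = u t + k (A u t + f t (u t)) + O(k^2), and the
  modified Strang step reproduces the three increments (k/2) f, k A u and (k/2) f up to O(k^2).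
  A half step of the integrator is within O(h^(p+1)) of the exact flow of v' = f (tau + s) v,
  and while this flow stays in a tube around the trajectory, where f is Lipschitz, it advances
  by h f t (u t) + O(h^2).  The generalized solution with boundary data bd (y + s A u t),
  y = u t + (k/2) f t (u t), stays O(k^2)-close to the affine function y + s A u t: their
  difference is S s (wbar 0 - y), small by the first half step, plus a term with derivative
  S s (A y - A u t) + (S s x - x), where x = A u t - K 0 (bd (A u t)) lies in the domain of the
  generator with A x = A (A u t); hence that derivative is O(k).
*)

section \<open>Calculus on real intervals\<close>

lemma norm_diff_le_of_vector_derivative_bound:
  fixes g :: "real \<Rightarrow> 'a::real_normed_vector"
  assumes "a \<le> b"
    and "\<And>s. s \<in> {a..b} \<Longrightarrow> (g has_vector_derivative g' s) (at s within {a..b})"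
    and "\<And>s. s \<in> {a..b} \<Longrightarrow> norm (g' s) \<le> B"
  shows "norm (g b - g a) \<le> B * (b - a)"
proof -
  have "norm (g b - g a) \<le> B * norm (b - a)"
  proof (rule differentiable_bound[where f'="\<lambda>s h. h *\<^sub>R g' s"])
    show "(g has_derivative (\<lambda>h. h *\<^sub>R g' s)) (at s within {a..b})" if "s \<in> {a..b}" for s
      using assms(2)[OF that] by (simp add: has_vector_derivative_def)
    show "onorm (\<lambda>h. h *\<^sub>R g' s) \<le> B" if "s \<in> {a..b}" for s
      using assms(3)[OF that] onorm_scaleR_left[OF bounded_linear_ident, of "g' s"]
      by (simp add: onorm_id)
  qed (use assms(1) in auto)
  then show ?thesis using assms(1) by simp
qed

lemma norm_taylor_remainder_le:
  fixes u :: "real \<Rightarrow> 'a::real_normed_vector"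
  assumes "a \<le> b"
    and u': "\<And>s. s \<in> {a..b} \<Longrightarrow> (u has_vector_derivative u' s) (at s within {a..b})"
    and u'': "\<And>s. s \<in> {a..b} \<Longrightarrow> (u' has_vector_derivative u'' s) (at s within {a..b})"
    and bound: "\<And>s. s \<in> {a..b} \<Longrightarrow> norm (u'' s) \<le> B"
  shows "norm (u b - u a - (b - a) *\<^sub>R u' a) \<le> B * (b - a)\<^sup>2"
proof -
  have "norm (u' s - u' a) \<le> B * (b - a)" if s: "s \<in> {a..b}" for s
  proof -
    have "norm (u' s - u' a) \<le> B * (s - a)"
      by (rule norm_diff_le_of_vector_derivative_bound)
        (use s in \<open>auto intro: bound has_vector_derivative_within_subset[OF u'']\<close>)
    also have "\<dots> \<le> B * (b - a)"
      using s bound[of a] assms(1)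
      by (intro mult_left_mono) (auto intro: order_trans[OF norm_ge_zero])
    finally show ?thesis .
  qed
  then have "norm (u b - u a - (b - a) *\<^sub>R u' a) \<le> norm (b - a) * (B * (b - a))"
    by (intro vector_differentiable_bound_linearization[OF u'])
      (use assms(1) in \<open>auto simp: closed_segment_eq_real_ivl\<close>)
  then show ?thesis using assms(1) by (simp add: power2_eq_square ac_simps)
qed

lemma C1_on_imp_continuous_on: "C1_on S g \<Longrightarrow> continuous_on S g"
  unfolding C1_on_def continuous_on_eq_continuous_within
  using has_vector_derivative_continuous by blast

lemma C2_taylor_bound:
  fixes u :: "real \<Rightarrow> 'a::real_normed_vector"
  assumes u': "\<And>t. t \<in> {a..b} \<Longrightarrow> (u has_vector_derivative u' t) (at t within {a..b})"
    and "C1_on {a..b} u'"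
  obtains B where "\<And>t k. t \<in> {a..b} \<Longrightarrow> 0 \<le> k \<Longrightarrow> t + k \<le> b \<Longrightarrow>
    norm (u (t + k) - u t - k *\<^sub>R u' t) \<le> B * k\<^sup>2"
proof -
  obtain u'' where u'': "\<And>t. t \<in> {a..b} \<Longrightarrow> (u' has_vector_derivative u'' t) (at t within {a..b})"
    and "continuous_on {a..b} u''"
    using \<open>C1_on {a..b} u'\<close> unfolding C1_on_def by blast
  have "bounded (u'' ` {a..b})"
    by (intro compact_imp_bounded compact_continuous_image \<open>continuous_on {a..b} u''\<close>) simp
  then obtain B where B: "\<And>t. t \<in> {a..b} \<Longrightarrow> norm (u'' t) \<le> B"
    unfolding bounded_iff by blast
  show ?thesis
  proof (rule that)
    fix t k assume "t \<in> {a..b}" "0 \<le> k" "t + k \<le> b"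
    then have sub: "{t..t + k} \<subseteq> {a..b}" by auto
    have "norm (u (t + k) - u t - (t + k - t) *\<^sub>R u' t) \<le> B * (t + k - t)\<^sup>2"
    proof (rule norm_taylor_remainder_le)
      fix s assume "s \<in> {t..t + k}"
      then have "s \<in> {a..b}" using sub by blast
      show "(u has_vector_derivative u' s) (at s within {t..t + k})"
        using has_vector_derivative_within_subset[OF u'[OF \<open>s \<in> {a..b}\<close>] sub] .
      show "(u' has_vector_derivative u'' s) (at s within {t..t + k})"
        using has_vector_derivative_within_subset[OF u''[OF \<open>s \<in> {a..b}\<close>] sub] .
      show "norm (u'' s) \<le> B" using B[OF \<open>s \<in> {a..b}\<close>] .
    qed (use \<open>0 \<le> k\<close> in simp)
    then show "norm (u (t + k) - u t - k *\<^sub>R u' t) \<le> B * k\<^sup>2" by simp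
  qed
qed

lemma ode_solution_stays_near_initial_value:
  fixes v :: "real \<Rightarrow> 'a::real_normed_vector"
  assumes v': "\<And>s. s \<in> {0..h} \<Longrightarrow> (v has_vector_derivative F s (v s)) (at s within {0..h})"
    and bound: "\<And>s x. s \<in> {0..h} \<Longrightarrow> norm (x - v 0) \<le> \<rho> \<Longrightarrow> norm (F s x) \<le> B"
    and "0 \<le> B" "B * h < \<rho>" and s: "s \<in> {0..h}"
  shows "norm (v s - v 0) \<le> B * s"
proof -
  have mvt: "norm (v r - v 0) \<le> B * r"
    if r: "r \<in> {0..h}" and near: "\<And>q. q \<in> {0..r} \<Longrightarrow> norm (v q - v 0) \<le> \<rho>" for r
  proof -
    have "norm (v r - v 0) \<le> B * (r - 0)"
    proof (rule norm_diff_le_of_vector_derivative_bound)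
      show "(v has_vector_derivative F q (v q)) (at q within {0..r})" if "q \<in> {0..r}" for q
        using that r by (auto intro: has_vector_derivative_within_subset[OF v'])
      show "norm (F q (v q)) \<le> B" if "q \<in> {0..r}" for q
        using that r near by (auto intro: bound)
    qed (use r in auto)
    then show ?thesis by simp
  qed
  have near: "norm (v q - v 0) < \<rho>" if q: "q \<in> {0..h}" for q
  proof (rule ccontr)
    assume far: "\<not> ?thesis"
    define P where "P = {0..h} \<inter> (\<lambda>q. norm (v q - v 0)) -` {\<rho>..}"
    have cont: "continuous_on {0..h} v"
      unfolding continuous_on_eq_continuous_within
      using v' has_vector_derivative_continuous by blast
    have "closed P"
      unfolding P_def by (intro continuous_closed_preimage continuous_intros cont)
    moreover have "P \<noteq> {}" "bdd_below P"
      using q far by (auto simp: P_def intro: bdd_belowI[of _ 0])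
    ultimately have exit: "Inf P \<in> P" using closed_contains_Inf by blast
    (* Inf P is the first time at which v reaches distance \<rho> from v 0. *)
    have below: "norm (v q - v 0) < \<rho>" if "q \<in> {0..<Inf P}" for q
      using that cInf_lower[OF _ \<open>bdd_below P\<close>, of q] exit by (force simp: P_def)
    have "\<rho> > 0"
      using q \<open>0 \<le> B\<close> \<open>B * h < \<rho>\<close> by (smt (verit) atLeastAtMost_iff mult_nonneg_nonneg)
    then have "Inf P \<noteq> 0" using exit by (auto simp: P_def)
    then have "Inf P > 0" using exit by (auto simp: P_def)
    have "norm (v (Inf P) - v 0) \<le> B * Inf P"
    proof (rule continuous_le_on_closure[where S="{0..<Inf P}" and f="\<lambda>r. norm (v r - v 0)"])
      show "continuous_on (closure {0..<Inf P}) (\<lambda>r. norm (v r - v 0))"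
        using \<open>Inf P > 0\<close> exit
        by (auto simp: P_def intro!: continuous_intros intro: continuous_on_subset[OF cont])
      show "norm (v r - v 0) \<le> B * Inf P" if "r \<in> {0..<Inf P}" for r
      proof -
        have "norm (v r - v 0) \<le> B * r"
          using that exit below by (intro mvt) (auto simp: P_def less_imp_le)
        also have "\<dots> \<le> B * Inf P" using that \<open>0 \<le> B\<close> by (simp add: mult_left_mono)
        finally show ?thesis .
      qed
    qed (use \<open>Inf P > 0\<close> in simp)
    moreover have "B * Inf P \<le> B * h" using exit \<open>0 \<le> B\<close> by (simp add: P_def mult_left_mono)
    ultimately show False using exit \<open>B * h < \<rho>\<close> by (simp add: P_def)
  qed
  show ?thesis using s near by (intro mvt) (auto simp: less_imp_le)
qed

lemma ode_solution_increment_le: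
  fixes v :: "real \<Rightarrow> 'a::real_normed_vector"
  assumes v': "\<And>s. s \<in> {0..h} \<Longrightarrow> (v has_vector_derivative F s (v s)) (at s within {0..h})"
    and bound: "\<And>s x. s \<in> {0..h} \<Longrightarrow> norm (x - v 0) \<le> \<rho> \<Longrightarrow> norm (F s x) \<le> B"
    and lipschitz: "\<And>s x. s \<in> {0..h} \<Longrightarrow> norm (x - v 0) \<le> \<rho> \<Longrightarrow>
      norm (F s x - F0) \<le> L * (s + norm (x - v 0)) + D"
    and "0 \<le> h" "0 \<le> B" "0 \<le> L" "B * h < \<rho>"
  shows "norm (v h - v 0 - h *\<^sub>R F0) \<le> (L * (1 + B) * h + D) * h"
proof -
  have stay: "norm (v s - v 0) \<le> B * s" if "s \<in> {0..h}" for s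
    using ode_solution_stays_near_initial_value[of h v F \<rho> B s] v' bound assms(5,7) that by blast
  have "norm ((v h - h *\<^sub>R F0) - (v 0 - 0 *\<^sub>R F0)) \<le> (L * (1 + B) * h + D) * (h - 0)"
  proof (rule norm_diff_le_of_vector_derivative_bound[where g'="\<lambda>s. F s (v s) - F0"])
    show "((\<lambda>s. v s - s *\<^sub>R F0) has_vector_derivative F s (v s) - F0) (at s within {0..h})"
      if "s \<in> {0..h}" for s
      using v'[OF that] by (auto intro!: derivative_eq_intros)
    show "norm (F s (v s) - F0) \<le> L * (1 + B) * h + D" if s: "s \<in> {0..h}" for s
    proof -
      have "B * s < \<rho>"
        using s assms(5,7) by (smt (verit) atLeastAtMost_iff mult_left_mono)
      then have "norm (F s (v s) - F0) \<le> L * (s + norm (v s - v 0)) + D"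
        using lipschitz[OF s] stay[OF s] by simp
      also have "\<dots> \<le> L * (1 + B) * h + D"
      proof -
        have "s + norm (v s - v 0) \<le> (1 + B) * h"
          using s stay[OF s] mult_left_mono[of s h B] assms(5) by (simp add: algebra_simps)
        from mult_left_mono[OF this assms(6)] show ?thesis by (simp add: mult.assoc)
      qed
      finally show ?thesis .
    qed
  qed (use assms(4) in auto)
  then show ?thesis by (simp add: algebra_simps)
qed

lemma C1_lipschitz_near_curve:
  fixes f :: "real \<Rightarrow> 'a::real_normed_vector \<Rightarrow> 'b::real_normed_vector"
  assumes f': "\<And>q. q \<in> {a..b} \<times> UNIV \<Longrightarrow>
      ((\<lambda>(t, x). f t x) has_derivative blinfun_apply (f' q)) (at q within {a..b} \<times> UNIV)"
    and f'_cont: "continuous_on ({a..b} \<times> UNIV) f'"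
    and u: "continuous_on {a..b} u"
  obtains e L where "e > 0" "L \<ge> 0"
    "\<And>t \<tau> x. t \<in> {a..b} \<Longrightarrow> \<tau> \<in> {a..b} \<Longrightarrow> \<bar>\<tau> - t\<bar> + norm (x - u t) < e \<Longrightarrow>
       norm (f \<tau> x - f t (u t)) \<le> L * (\<bar>\<tau> - t\<bar> + norm (x - u t))"
proof -
  define W where "W = {a..b} \<times> (UNIV :: 'a set)"
  define \<Gamma> where "\<Gamma> = (\<lambda>t. (t, u t)) ` {a..b}"
  have "compact \<Gamma>"
    unfolding \<Gamma>_def by (intro compact_continuous_image continuous_intros u) simp
  have "\<Gamma> \<subseteq> W" by (auto simp: \<Gamma>_def W_def)
  have "bounded (f' ` \<Gamma>)"
    using \<open>compact \<Gamma>\<close> \<open>\<Gamma> \<subseteq> W\<close> f'_cont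
    by (auto simp: W_def intro!: compact_imp_bounded compact_continuous_image
        intro: continuous_on_subset)
  then obtain N where N: "N \<ge> 0" "\<And>q. q \<in> \<Gamma> \<Longrightarrow> norm (f' q) < N"
    using bounded_pos_less by (metis imageI less_imp_le)
  obtain U where "open U" and U: "U \<inter> W = f' -` ball 0 N \<inter> W"
    using f'_cont by (auto simp: W_def continuous_on_open_invariant)
  moreover have "\<Gamma> \<subseteq> U" using U N(2) \<open>\<Gamma> \<subseteq> W\<close> by auto
  ultimately obtain e where e: "e > 0" "(\<Union>q\<in>\<Gamma>. ball q e) \<subseteq> U"
    using compact_subset_open_imp_ball_epsilon_subset \<open>compact \<Gamma>\<close> by metis
  show ?thesis
  proof (rule that[OF e(1) N(1)])
    fix t \<tau> x assume t: "t \<in> {a..b}" and \<tau>: "\<tau> \<in> {a..b}"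
      and near: "\<bar>\<tau> - t\<bar> + norm (x - u t) < e"
    define V where "V = ball (t, u t) e \<inter> W"
    have "dist (t, u t) (\<tau>, x) \<le> \<bar>\<tau> - t\<bar> + norm (x - u t)"
      using norm_Pair_le[of "t - \<tau>" "u t - x"]
      by (simp add: dist_norm abs_minus_commute norm_minus_commute)
    then have "(\<tau>, x) \<in> V" using near \<tau> by (simp add: V_def W_def)
    moreover have "(t, u t) \<in> V" using t e(1) by (simp add: V_def W_def)
    moreover have "convex V" by (simp add: V_def W_def convex_Int convex_Times)
    moreover have "((\<lambda>(t, x). f t x) has_derivative blinfun_apply (f' q)) (at q within V)"
      if "q \<in> V" for q
      using f' that by (auto simp: V_def W_def intro: has_derivative_subset)
    moreover have "onorm (blinfun_apply (f' q)) \<le> N" if "q \<in> V" for q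
    proof -
      have "q \<in> U \<inter> W" using that e(2) t by (fastforce simp: V_def \<Gamma>_def)
      then show ?thesis using U by (simp add: norm_blinfun.rep_eq[symmetric])
    qed
    ultimately have "norm (f \<tau> x - f t (u t)) \<le> N * norm ((\<tau>, x) - (t, u t))"
      using differentiable_bound[of V "\<lambda>(t, x). f t x" "\<lambda>q. blinfun_apply (f' q)" N
          "(\<tau>, x)" "(t, u t)"]
      by simp
    also have "\<dots> \<le> N * (\<bar>\<tau> - t\<bar> + norm (x - u t))"
      using norm_Pair_le[of "\<tau> - t" "x - u t"] N(1) by (simp add: mult_left_mono)
    finally show "norm (f \<tau> x - f t (u t)) \<le> N * (\<bar>\<tau> - t\<bar> + norm (x - u t))" .
  qed
qed

section \<open>Bounded \<open>C\<^sub>0\<close>-semigroups\<close>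

locale bounded_C0_semigroup =
  fixes S :: "real \<Rightarrow> 'a::real_normed_vector \<Rightarrow> 'a" and M :: real
  assumes C0: "C0_semigroup S"
    and onorm_le: "\<And>t. t \<ge> 0 \<Longrightarrow> onorm (S t) \<le> M"
    and M_pos: "M > 0"
begin

lemma zero [simp]: "S 0 x = x"
  using C0 by (simp add: C0_semigroup_def)

lemma semigroup: "t \<ge> 0 \<Longrightarrow> s \<ge> 0 \<Longrightarrow> S (t + s) x = S t (S s x)"
  using C0 by (simp add: C0_semigroup_def)

lemma bounded_linear: "t \<ge> 0 \<Longrightarrow> bounded_linear (S t)"
  using C0 by (simp add: C0_semigroup_def)

lemma linear: "t \<ge> 0 \<Longrightarrow> linear (S t)"
  using bounded_linear bounded_linear.linear by blast

lemma norm_le: "t \<ge> 0 \<Longrightarrow> norm (S t x) \<le> M * norm x"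
  using onorm[OF bounded_linear] onorm_le
  by (meson mult_right_mono norm_ge_zero order_trans)

lemma strongly_continuous_at_0:
  assumes "e > 0"
  obtains d where "d > 0" "\<And>h. 0 \<le> h \<Longrightarrow> h < d \<Longrightarrow> norm (S h x - x) < e"
proof -
  have "((\<lambda>t. S t x) \<longlongrightarrow> x) (at_right 0)"
    using C0 by (simp add: C0_semigroup_def)
  from tendstoD[OF this assms] obtain d where "d > 0" "\<And>h. 0 < h \<Longrightarrow> h < d \<Longrightarrow> dist (S h x) x < e"
    unfolding eventually_at_right_field by auto
  with assms show ?thesis
    by (intro that[of d]) (auto simp: dist_norm le_less)
qed

lemma continuous_on_orbit: "continuous_on {0..} (\<lambda>\<sigma>. S \<sigma> x)"
  unfolding continuous_on_iff
proof (intro ballI allI impI)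
  fix \<sigma> e :: real assume \<sigma>: "\<sigma> \<in> {0..}" and e: "e > 0"
  obtain d where d: "d > 0" "\<And>h. 0 \<le> h \<Longrightarrow> h < d \<Longrightarrow> norm (S h x - x) < e / M"
    using strongly_continuous_at_0[of "e / M"] e M_pos by auto
  have "dist (S \<tau> x) (S \<sigma> x) < e" if "\<tau> \<ge> 0" "\<sigma> \<ge> 0" "\<tau> \<le> \<sigma>" "\<sigma> - \<tau> < d" for \<tau> \<sigma>
  proof -
    have "S \<sigma> x - S \<tau> x = S \<tau> (S (\<sigma> - \<tau>) x - x)"
      using semigroup[of \<tau> "\<sigma> - \<tau>" x] linear_diff[OF linear] that by simp
    then have "norm (S \<sigma> x - S \<tau> x) \<le> M * norm (S (\<sigma> - \<tau>) x - x)"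
      using norm_le that by simp
    also have "\<dots> < M * (e / M)"
      using d that M_pos by (intro mult_strict_left_mono) auto
    finally show ?thesis using M_pos by (simp add: dist_norm norm_minus_commute)
  qed
  then show "\<exists>d>0. \<forall>\<tau>\<in>{0..}. dist \<tau> \<sigma> < d \<longrightarrow> dist (S \<tau> x) (S \<sigma> x) < e"
    using d(1) \<sigma> by (intro exI[of _ d]) (smt (verit) atLeast_iff dist_commute dist_real_def)
qed

lemma difference_quotient_estimate:
  assumes lim: "((\<lambda>h. (1 / h) *\<^sub>R (S h z - z)) \<longlongrightarrow> y) (at_right 0)" and "e > 0"
  obtains d where "d > 0" "\<And>h. 0 < h \<Longrightarrow> h < d \<Longrightarrow> norm (S h z - z - h *\<^sub>R y) \<le> e * h"
proof -
  from tendstoD[OF lim \<open>e > 0\<close>] obtain d where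
    d: "d > 0" "\<And>h. 0 < h \<Longrightarrow> h < d \<Longrightarrow> dist ((1 / h) *\<^sub>R (S h z - z)) y < e"
    unfolding eventually_at_right_field by auto
  have "norm (S h z - z - h *\<^sub>R y) \<le> e * h" if h: "0 < h" "h < d" for h
  proof -
    have "S h z - z - h *\<^sub>R y = h *\<^sub>R ((1 / h) *\<^sub>R (S h z - z) - y)"
      using h by (simp add: algebra_simps)
    then show ?thesis
      using d(2)[OF h] h by (simp add: dist_norm)
  qed
  with d(1) show ?thesis by (rule that)
qed

lemma norm_forward_increment_le:
  assumes "\<sigma> \<ge> 0" "h \<ge> 0"
  shows "norm (S (\<sigma> + h) z - S \<sigma> z - h *\<^sub>R S \<sigma> y) \<le> M * norm (S h z - z - h *\<^sub>R y)"
proof -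
  have "S (\<sigma> + h) z - S \<sigma> z - h *\<^sub>R S \<sigma> y = S \<sigma> (S h z - z - h *\<^sub>R y)"
    using semigroup[of \<sigma> h z] assms by (simp add: linear_diff[OF linear] linear_scale[OF linear])
  then show ?thesis using norm_le[OF assms(1)] by simp
qed

lemma norm_backward_increment_le:
  assumes "\<tau> \<ge> 0" "h \<ge> 0"
  shows "norm (S \<tau> z - S (\<tau> + h) z + h *\<^sub>R S (\<tau> + h) y)
    \<le> M * (h * norm (S h y - y) + norm (S h z - z - h *\<^sub>R y))"
proof -
  have "S \<tau> z - S (\<tau> + h) z + h *\<^sub>R S (\<tau> + h) y = S \<tau> (h *\<^sub>R (S h y - y) - (S h z - z - h *\<^sub>R y))"
    using semigroup[of \<tau> h z] semigroup[of \<tau> h y] assms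
    by (simp add: linear_diff[OF linear] linear_add[OF linear] linear_scale[OF linear]
        algebra_simps)
  also have "norm \<dots> \<le> M * norm (h *\<^sub>R (S h y - y) - (S h z - z - h *\<^sub>R y))"
    using norm_le[OF assms(1)] .
  also have "\<dots> \<le> M * (h * norm (S h y - y) + norm (S h z - z - h *\<^sub>R y))"
    using norm_triangle_ineq4[of "h *\<^sub>R (S h y - y)" "S h z - z - h *\<^sub>R y"] M_pos assms(2)
    by (intro mult_left_mono) simp_all
  finally show ?thesis .
qed

lemma orbit_has_vector_derivative:
  assumes lim: "((\<lambda>h. (1 / h) *\<^sub>R (S h z - z)) \<longlongrightarrow> y) (at_right 0)" and \<sigma>: "\<sigma> \<ge> 0"
  shows "((\<lambda>\<sigma>. S \<sigma> z) has_vector_derivative S \<sigma> y) (at \<sigma> within {0..})"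
  unfolding has_vector_derivative_def has_derivative_within_alt
proof (intro conjI allI impI bounded_linear_scaleR_left)
  fix e :: real assume "e > 0"
  define \<epsilon> where "\<epsilon> = e / (2 * M)"
  have "\<epsilon> > 0" "M * (\<epsilon> + \<epsilon>) = e" using \<open>e > 0\<close> M_pos by (simp_all add: \<epsilon>_def)
  obtain d1 where d1: "d1 > 0" "\<And>h. 0 < h \<Longrightarrow> h < d1 \<Longrightarrow> norm (S h z - z - h *\<^sub>R y) \<le> \<epsilon> * h"
    using difference_quotient_estimate[OF lim \<open>\<epsilon> > 0\<close>] by blast
  obtain d2 where d2: "d2 > 0" "\<And>h. 0 \<le> h \<Longrightarrow> h < d2 \<Longrightarrow> norm (S h y - y) < \<epsilon>"
    using strongly_continuous_at_0[OF \<open>\<epsilon> > 0\<close>] by blast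
  have "norm (S \<tau> z - S \<sigma> z - (\<tau> - \<sigma>) *\<^sub>R S \<sigma> y) \<le> e * \<bar>\<tau> - \<sigma>\<bar>"
    if \<tau>: "\<tau> \<ge> 0" "\<bar>\<tau> - \<sigma>\<bar> < min d1 d2" for \<tau>
  proof (cases "\<tau> = \<sigma>")
    case False
    define h where "h = \<bar>\<tau> - \<sigma>\<bar>"
    have h: "0 < h" "h < d1" "h < d2" using False \<tau> by (auto simp: h_def)
    have "norm (S h z - z - h *\<^sub>R y) \<le> \<epsilon> * h" "h * norm (S h y - y) \<le> h * \<epsilon>"
      using d1(2)[OF h(1,2)] d2(2)[of h] h by (simp_all add: less_imp_le)
    then have "h * norm (S h y - y) + norm (S h z - z - h *\<^sub>R y) \<le> (\<epsilon> + \<epsilon>) * h"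
      by (simp add: algebra_simps)
    then have "M * (h * norm (S h y - y) + norm (S h z - z - h *\<^sub>R y)) \<le> M * ((\<epsilon> + \<epsilon>) * h)"
      using M_pos by (intro mult_left_mono) auto
    also have "\<dots> = e * h" using \<open>M * (\<epsilon> + \<epsilon>) = e\<close> by (metis mult.assoc)
    finally have backward: "M * (h * norm (S h y - y) + norm (S h z - z - h *\<^sub>R y)) \<le> e * h" .
    have "M * norm (S h z - z - h *\<^sub>R y) \<le> M * (h * norm (S h y - y) + norm (S h z - z - h *\<^sub>R y))"
      using M_pos h(1) by (intro mult_left_mono) auto
    with backward have forward: "M * norm (S h z - z - h *\<^sub>R y) \<le> e * h" by linarith
    consider "\<tau> = \<sigma> + h" | "\<sigma> = \<tau> + h" unfolding h_def by linarith
    then show ?thesis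
    proof cases
      case 1
      then show ?thesis
        using norm_forward_increment_le[OF \<sigma>, of h z y] forward h(1) by simp
    next
      case 2
      then show ?thesis
        using norm_backward_increment_le[OF \<tau>(1), of h z y] backward h(1)
        by (simp add: algebra_simps)
    qed
  qed simp
  then show "\<exists>d>0. \<forall>\<tau>\<in>{0..}. norm (\<tau> - \<sigma>) < d \<longrightarrow>
      norm (S \<tau> z - S \<sigma> z - (\<tau> - \<sigma>) *\<^sub>R S \<sigma> y) \<le> e * norm (\<tau> - \<sigma>)"
    using d1(1) d2(1) by (intro exI[of _ "min d1 d2"]) auto
qed

lemma norm_orbit_diff_le:
  assumes lim: "((\<lambda>h. (1 / h) *\<^sub>R (S h z - z)) \<longlongrightarrow> y) (at_right 0)" and "s \<ge> 0"
  shows "norm (S s z - z) \<le> M * norm y * s"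
proof -
  have "norm (S s z - S 0 z) \<le> M * norm y * (s - 0)"
  proof (rule norm_diff_le_of_vector_derivative_bound)
    show "((\<lambda>\<sigma>. S \<sigma> z) has_vector_derivative S \<sigma> y) (at \<sigma> within {0..s})" if "\<sigma> \<in> {0..s}" for \<sigma>
      using orbit_has_vector_derivative[OF lim, of \<sigma>] that
      by (auto intro: has_vector_derivative_within_subset)
  qed (use assms(2) norm_le in auto)
  then show ?thesis by simp
qed

end

lemma negative_type_imp_bounded_C0_semigroup:
  assumes "C0_semigroup S" "negative_type S \<omega>"
  obtains M where "bounded_C0_semigroup S M"
proof -
  obtain M0 where "\<omega> < 0" and M0: "\<And>t. t \<ge> 0 \<Longrightarrow> onorm (S t) \<le> M0 * exp (\<omega> * t)"
    using assms(2) unfolding negative_type_def by blast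
  have "onorm (S t) \<le> \<bar>M0\<bar> + 1" if "t \<ge> 0" for t
  proof -
    have "exp (\<omega> * t) \<le> 1" using \<open>\<omega> < 0\<close> that by (simp add: mult_nonpos_nonneg)
    have "M0 * exp (\<omega> * t) \<le> \<bar>M0\<bar> * exp (\<omega> * t)" by (simp add: mult_right_mono)
    also have "\<dots> \<le> \<bar>M0\<bar>" using \<open>exp (\<omega> * t) \<le> 1\<close> by (simp add: mult_left_le)
    finally have "M0 * exp (\<omega> * t) \<le> \<bar>M0\<bar>" .
    then show ?thesis using M0[OF that] by linarith
  qed
  then show ?thesis
    using assms(1) by (intro that[of "\<bar>M0\<bar> + 1"]) (simp add: bounded_C0_semigroup_def)
qed

section \<open>The boundary value problem\<close>

lemma linear_onD:
  assumes "linear_on D L" "x \<in> D" "y \<in> D"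
  shows "L (x + y) = L x + L y" "L (c *\<^sub>R x) = c *\<^sub>R L x" "L (x - y) = L x - L y"
proof -
  show add: "L (x + y) = L x + L y" and scale: "L (c *\<^sub>R x) = c *\<^sub>R L x" for c
    using assms by (auto simp: linear_on_def)
  have "- y \<in> D"
    using assms by (auto simp: linear_on_def intro: subspace_neg)
  moreover have "L (- y) = - L y"
    using assms(1,3) unfolding linear_on_def by (metis scaleR_minus1_left)
  ultimately show "L (x - y) = L x - L y"
    using assms(1,2) unfolding linear_on_def by (metis diff_conv_add_uminus)
qed

lemma linear_on_subspace: "linear_on D L \<Longrightarrow> subspace D"
  by (simp add: linear_on_def)

locale boundary_semigroup = bounded_C0_semigroup S M
  for S :: "real \<Rightarrow> 'x::banach \<Rightarrow> 'x" and M +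
  fixes A :: "'x \<Rightarrow> 'x" and DA :: "'x set" and bd :: "'x \<Rightarrow> 'y::real_normed_vector"
    and K :: "real \<Rightarrow> 'y \<Rightarrow> 'x"
  assumes A_linear: "linear_on DA A" and bd_linear: "linear_on DA bd"
    and generates: "generates {x \<in> DA. bd x = 0} A S"
    and K0_in_domain: "K 0 v \<in> DA" and A_K0: "A (K 0 v) = 0" and bd_K0: "bd (K 0 v) = v"
    and K0_unique: "x \<in> DA \<Longrightarrow> A x = 0 \<Longrightarrow> x = K 0 (bd x)"
begin

lemma difference_quotient_tendsto:
  "x \<in> DA \<Longrightarrow> bd x = 0 \<Longrightarrow> ((\<lambda>h. (1 / h) *\<^sub>R (S h x - x)) \<longlongrightarrow> A x) (at_right 0)"
  using generates by (simp add: generates_def)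

lemma K0_affine: "K 0 (v + s *\<^sub>R w) = K 0 v + s *\<^sub>R K 0 w"
proof -
  have D: "K 0 v \<in> DA" "K 0 w \<in> DA" "s *\<^sub>R K 0 w \<in> DA"
    using K0_in_domain linear_on_subspace[OF A_linear] by (auto intro: subspace_scale)
  then have "K 0 v + s *\<^sub>R K 0 w \<in> DA"
    using linear_on_subspace[OF A_linear] by (auto intro: subspace_add)
  moreover have "A (K 0 v + s *\<^sub>R K 0 w) = 0" "bd (K 0 v + s *\<^sub>R K 0 w) = v + s *\<^sub>R w"
    using D by (simp_all add: linear_onD[OF A_linear] linear_onD[OF bd_linear] A_K0 bd_K0)
  ultimately show ?thesis using K0_unique by metis
qed

lemma kernel_projection:
  assumes "x \<in> DA"
  shows "x - K 0 (bd x) \<in> DA" "bd (x - K 0 (bd x)) = 0" "A (x - K 0 (bd x)) = A x"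
  using assms K0_in_domain linear_on_subspace[OF A_linear]
  by (simp_all add: subspace_diff linear_onD[OF A_linear] linear_onD[OF bd_linear] A_K0 bd_K0)

lemma norm_gen_sol_minus_affine_le:
  assumes y: "y \<in> DA" and z: "z \<in> DA" and s: "s \<ge> 0"
  shows "norm (gen_sol S K a (bd y) (bd z) s - y - s *\<^sub>R z)
    \<le> M * norm (a - y) + s * (M * norm (A y - z) + M * norm (A z) * s)"
proof -
  define z0 where "z0 = y - K 0 (bd y)"
  define x1 where "x1 = z - K 0 (bd z)"
  define I where "I \<sigma> = integral {0..\<sigma>} (\<lambda>r. S r (K 0 (bd z)))" for \<sigma>
  define G where "G \<sigma> = S \<sigma> z0 + \<sigma> *\<^sub>R K 0 (bd z) - I \<sigma> - \<sigma> *\<^sub>R z" for \<sigma>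
  have "gen_sol S K a (bd y) (bd z) s - y - s *\<^sub>R z = S s (a - y) + (G s - G 0)"
    using s
    by (simp add: gen_sol_def G_def I_def z0_def K0_affine linear_diff[OF linear] algebra_simps)
  moreover have "norm (G s - G 0) \<le> (M * norm (A y - z) + M * norm (A z) * s) * (s - 0)"
  proof (rule norm_diff_le_of_vector_derivative_bound)
    fix \<sigma> assume \<sigma>: "\<sigma> \<in> {0..s}"
    have "((\<lambda>\<sigma>. S \<sigma> z0) has_vector_derivative S \<sigma> (A y)) (at \<sigma> within {0..s})"
      using orbit_has_vector_derivative[OF difference_quotient_tendsto, of z0 \<sigma>]
        kernel_projection[OF y] \<sigma>
      by (auto simp: z0_def intro: has_vector_derivative_within_subset)
    moreover have "(I has_vector_derivative S \<sigma> (K 0 (bd z))) (at \<sigma> within {0..s})"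
      unfolding I_def using \<sigma>
      by (intro integral_has_vector_derivative continuous_on_subset[OF continuous_on_orbit]) auto
    ultimately show "(G has_vector_derivative
        S \<sigma> (A y) + K 0 (bd z) - S \<sigma> (K 0 (bd z)) - z) (at \<sigma> within {0..s})"
      unfolding G_def by (auto intro!: derivative_eq_intros)
    have "S \<sigma> (A y) + K 0 (bd z) - S \<sigma> (K 0 (bd z)) - z = S \<sigma> (A y - z) + (S \<sigma> x1 - x1)"
      using \<sigma> by (simp add: x1_def linear_diff[OF linear])
    also have "norm \<dots> \<le> M * norm (A y - z) + M * norm (A z) * \<sigma>"
      using norm_le[of \<sigma> "A y - z"] \<sigma> kernel_projection[OF z]
        norm_orbit_diff_le[OF difference_quotient_tendsto, of x1 \<sigma>]
      by (smt (verit) atLeastAtMost_iff norm_triangle_ineq x1_def)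
    also have "\<dots> \<le> M * norm (A y - z) + M * norm (A z) * s"
      using \<sigma> M_pos by (simp add: mult_left_mono)
    finally show "norm (S \<sigma> (A y) + K 0 (bd z) - S \<sigma> (K 0 (bd z)) - z)
        \<le> M * norm (A y - z) + M * norm (A z) * s" .
  qed (use s in auto)
  moreover have "norm (S s (a - y)) \<le> M * norm (a - y)" using norm_le[OF s] .
  ultimately show ?thesis
    by (smt (verit, best) mult.commute norm_triangle_ineq)
qed

end

section \<open>Local error of the modified Strang splitting\<close>

locale lipschitz_tube =
  fixes f :: "real \<Rightarrow> 'a::real_normed_vector \<Rightarrow> 'a" and u :: "real \<Rightarrow> 'a" and T e L B :: real
  assumes e_pos: "e > 0" and L_nonneg: "L \<ge> 0"
    and lipschitz: "\<And>t \<tau> x. t \<in> {0..T} \<Longrightarrow> \<tau> \<in> {0..T} \<Longrightarrow> \<bar>\<tau> - t\<bar> + norm (x - u t) < e \<Longrightarrow>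
      norm (f \<tau> x - f t (u t)) \<le> L * (\<bar>\<tau> - t\<bar> + norm (x - u t))"
    and f_bounded: "\<And>t. t \<in> {0..T} \<Longrightarrow> norm (f t (u t)) \<le> B"
begin

lemma flow_increment_le:
  assumes v': "\<And>s. s \<in> {0..h} \<Longrightarrow> (v has_vector_derivative f (\<tau> + s) (v s)) (at s within {0..h})"
    and t: "t \<in> {0..T}" "t \<le> \<tau>" "\<tau> + h \<le> T" and \<delta>: "\<tau> - t + norm (v 0 - u t) \<le> \<delta>"
    and "0 \<le> h" and small: "\<delta> + h < e / 2" "(B + L * e) * h < e / 2"
  shows "norm (v h - v 0 - h *\<^sub>R f t (u t)) \<le> L * (1 + B + L * e) * h\<^sup>2 + L * \<delta> * h"
proof -
  have tube: "\<tau> + s \<in> {0..T}" "\<bar>\<tau> + s - t\<bar> + norm (x - u t) \<le> s + norm (x - v 0) + \<delta>"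
    "\<bar>\<tau> + s - t\<bar> + norm (x - u t) < e"
    if s: "s \<in> {0..h}" and x: "norm (x - v 0) \<le> e / 2" for s x
  proof -
    have "norm (x - u t) \<le> norm (x - v 0) + norm (v 0 - u t)"
      using norm_triangle_ineq[of "x - v 0" "v 0 - u t"] by simp
    then show "\<bar>\<tau> + s - t\<bar> + norm (x - u t) \<le> s + norm (x - v 0) + \<delta>"
      using s t \<delta> by auto
    then show "\<bar>\<tau> + s - t\<bar> + norm (x - u t) < e" using s x small(1) by auto
    show "\<tau> + s \<in> {0..T}" using s t by auto
  qed
  have lip: "norm (f (\<tau> + s) x - f t (u t)) \<le> L * (s + norm (x - v 0)) + L * \<delta>"
    if s: "s \<in> {0..h}" and x: "norm (x - v 0) \<le> e / 2" for s x
  proof -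
    have "norm (f (\<tau> + s) x - f t (u t)) \<le> L * (\<bar>\<tau> + s - t\<bar> + norm (x - u t))"
      using tube[OF s x] t by (intro lipschitz) auto
    also have "\<dots> \<le> L * (s + norm (x - v 0) + \<delta>)"
      using tube(2)[OF s x] L_nonneg by (rule mult_left_mono)
    finally show ?thesis by (simp add: algebra_simps)
  qed
  have bound: "norm (f (\<tau> + s) x) \<le> B + L * e"
    if s: "s \<in> {0..h}" and x: "norm (x - v 0) \<le> e / 2" for s x
  proof -
    have "norm (f (\<tau> + s) x - f t (u t)) \<le> L * (\<bar>\<tau> + s - t\<bar> + norm (x - u t))"
      using tube[OF s x] t by (intro lipschitz) auto
    also have "\<dots> \<le> L * e"
      using tube(3)[OF s x] L_nonneg by (simp add: mult_left_mono)
    finally show ?thesis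
      using f_bounded[OF t(1)] norm_triangle_sub[of "f (\<tau> + s) x" "f t (u t)"] by linarith
  qed
  have "norm (v h - v 0 - h *\<^sub>R f t (u t)) \<le> (L * (1 + (B + L * e)) * h + L * \<delta>) * h"
    using \<open>0 \<le> h\<close> small(2) order.trans[OF norm_ge_zero f_bounded[OF t(1)]] L_nonneg e_pos
    by (intro ode_solution_increment_le[where F="\<lambda>s. f (\<tau> + s)" and \<rho>="e / 2"])
      (auto intro: v' bound lip)
  then show ?thesis by (simp add: power2_eq_square algebra_simps)
qed

lemma half_step_error:
  assumes order: "order_step f Psi p C h \<tau> x0" and "p \<ge> 1"
    and t: "t \<in> {0..T}" "t \<le> \<tau>" "\<tau> + h \<le> T" and \<delta>: "\<tau> - t + norm (x0 - u t) \<le> \<delta>"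
    and h: "0 < h" "h \<le> 1" and small: "\<delta> + h < e / 2" "(B + L * e) * h < e / 2"
  shows "norm (Psi h \<tau> x0 - x0 - h *\<^sub>R f t (u t))
    \<le> (\<bar>C\<bar> + L * (1 + B + L * e)) * h\<^sup>2 + L * \<delta> * h"
proof -
  obtain v where v0: "v 0 = x0"
    and v': "\<And>s. s \<in> {0..h} \<Longrightarrow> (v has_vector_derivative f (\<tau> + s) (v s)) (at s within {0..h})"
    and err: "norm (Psi h \<tau> x0 - v h) \<le> C * h ^ (p + 1)"
    using order unfolding order_step_def by blast
  have "norm (v h - x0 - h *\<^sub>R f t (u t)) \<le> L * (1 + B + L * e) * h\<^sup>2 + L * \<delta> * h"
    using flow_increment_le[OF v' t] \<delta> h small by (simp add: v0)
  moreover have "C * h ^ (p + 1) \<le> \<bar>C\<bar> * h\<^sup>2"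
  proof -
    have "h ^ (p + 1) \<le> h\<^sup>2" using h \<open>p \<ge> 1\<close> by (intro power_decreasing) auto
    then have "\<bar>C\<bar> * h ^ (p + 1) \<le> \<bar>C\<bar> * h\<^sup>2" by (simp add: mult_left_mono)
    moreover have "C * h ^ (p + 1) \<le> \<bar>C\<bar> * h ^ (p + 1)" using h by (simp add: mult_right_mono)
    ultimately show ?thesis by linarith
  qed
  ultimately show ?thesis
    using err norm_triangle_ineq[of "Psi h \<tau> x0 - v h" "v h - x0 - h *\<^sub>R f t (u t)"]
    by (simp add: algebra_simps)
qed

end

lemma C2_solution_bounds:
  fixes u :: "real \<Rightarrow> 'a::real_normed_vector"
  assumes "T > 0"
    and u_deriv: "\<And>t. t \<in> {0..T} \<Longrightarrow>
      (u has_vector_derivative A (u t) + f t (u t)) (at t within {0..T})"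
    and u_C2: "\<exists>u'. (\<forall>t\<in>{0..T}. (u has_vector_derivative u' t) (at t within {0..T}))
      \<and> C1_on {0..T} u'"
    and cont: "continuous_on {0..T} (\<lambda>t. A (u t))" "continuous_on {0..T} (\<lambda>t. A (A (u t)))"
      "continuous_on {0..T} (\<lambda>t. A (f t (u t)))"
  obtains B where "B \<ge> 0"
    "\<And>t. t \<in> {0..T} \<Longrightarrow> norm (f t (u t)) \<le> B \<and> norm (A (u t)) \<le> B
      \<and> norm (A (A (u t))) \<le> B \<and> norm (A (f t (u t))) \<le> B"
    "\<And>t k. t \<in> {0..T} \<Longrightarrow> 0 \<le> k \<Longrightarrow> t + k \<le> T \<Longrightarrow>
      norm (u (t + k) - u t - k *\<^sub>R (A (u t) + f t (u t))) \<le> B * k\<^sup>2"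
proof -
  obtain u' where u': "\<And>t. t \<in> {0..T} \<Longrightarrow> (u has_vector_derivative u' t) (at t within {0..T})"
    and "C1_on {0..T} u'" using u_C2 by blast
  have u'_eq: "u' t = A (u t) + f t (u t)" if "t \<in> {0..T}" for t
    using vector_derivative_unique_within_closed_interval[of 0 T t u] \<open>T > 0\<close> that u' u_deriv
    by auto
  obtain Bt where taylor: "\<And>t k. t \<in> {0..T} \<Longrightarrow> 0 \<le> k \<Longrightarrow> t + k \<le> T \<Longrightarrow>
      norm (u (t + k) - u t - k *\<^sub>R u' t) \<le> Bt * k\<^sup>2"
    using C2_taylor_bound[OF u' \<open>C1_on {0..T} u'\<close>] by blast
  have "continuous_on {0..T} (\<lambda>t. u' t - A (u t))"
    using C1_on_imp_continuous_on[OF \<open>C1_on {0..T} u'\<close>] cont(1) by (rule continuous_on_diff)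
  then have "continuous_on {0..T} (\<lambda>t. f t (u t))" by (rule continuous_on_eq) (simp add: u'_eq)
  then have "continuous_on {0..T}
      (\<lambda>t. norm (f t (u t)) + norm (A (u t)) + norm (A (A (u t))) + norm (A (f t (u t))))"
    using cont by (auto intro!: continuous_on_add continuous_on_norm)
  then have "bounded ((\<lambda>t. norm (f t (u t)) + norm (A (u t)) + norm (A (A (u t)))
      + norm (A (f t (u t)))) ` {0..T})"
    by (rule compact_imp_bounded[OF compact_continuous_image[OF _ compact_Icc]])
  then obtain Bd where Bd: "\<forall>t\<in>{0..T}.
      norm (f t (u t)) + norm (A (u t)) + norm (A (A (u t))) + norm (A (f t (u t))) \<le> Bd"
    unfolding bounded_iff by auto
  show ?thesis
  proof (rule that[of "\<bar>Bt\<bar> + \<bar>Bd\<bar>"])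
    fix t assume t: "t \<in> {0..T}"
    show "norm (f t (u t)) \<le> \<bar>Bt\<bar> + \<bar>Bd\<bar> \<and> norm (A (u t)) \<le> \<bar>Bt\<bar> + \<bar>Bd\<bar>
      \<and> norm (A (A (u t))) \<le> \<bar>Bt\<bar> + \<bar>Bd\<bar> \<and> norm (A (f t (u t))) \<le> \<bar>Bt\<bar> + \<bar>Bd\<bar>"
      using Bd t norm_ge_zero[of "f t (u t)"] norm_ge_zero[of "A (u t)"]
        norm_ge_zero[of "A (A (u t))"] norm_ge_zero[of "A (f t (u t))"]
      by (smt (verit))
    fix k assume "0 \<le> k" "t + k \<le> T"
    moreover have "Bt * k\<^sup>2 \<le> (\<bar>Bt\<bar> + \<bar>Bd\<bar>) * k\<^sup>2" by (intro mult_right_mono) auto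
    ultimately show "norm (u (t + k) - u t - k *\<^sub>R (A (u t) + f t (u t))) \<le> (\<bar>Bt\<bar> + \<bar>Bd\<bar>) * k\<^sup>2"
      using taylor[OF t] u'_eq[OF t] by fastforce
  qed simp
qed

locale strang_data = boundary_semigroup S M A DA bd K + lipschitz_tube f u T e L B
  for S :: "real \<Rightarrow> 'x::banach \<Rightarrow> 'x" and M A DA and bd :: "'x \<Rightarrow> 'y::real_normed_vector"
    and K f u T e L B +
  assumes in_domain: "\<And>t. t \<in> {0..T} \<Longrightarrow> u t \<in> DA \<and> A (u t) \<in> DA \<and> f t (u t) \<in> DA"
    and A_bounded: "\<And>t. t \<in> {0..T} \<Longrightarrow>
      norm (A (u t)) \<le> B \<and> norm (A (A (u t))) \<le> B \<and> norm (A (f t (u t))) \<le> B"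
    and taylor: "\<And>t k. t \<in> {0..T} \<Longrightarrow> k \<ge> 0 \<Longrightarrow> t + k \<le> T \<Longrightarrow>
      norm (u (t + k) - u t - k *\<^sub>R (A (u t) + f t (u t))) \<le> B * k\<^sup>2"
    and B_nonneg: "B \<ge> 0"
begin

lemma semigroup_step_error:
  fixes t k :: real
  defines "y \<equiv> u t + (k / 2) *\<^sub>R f t (u t)"
  assumes t: "t \<in> {0..T}" and k: "0 < k" "k \<le> 1"
    and a: "norm (a - y) \<le> E * k\<^sup>2" and "E \<ge> 0"
  shows "norm (gen_sol S K a (bd y) (bd (A (u t))) k - y - k *\<^sub>R A (u t))
      \<le> (M * E + 2 * M * B) * k\<^sup>2" (is "norm (?w - _ - _) \<le> _")
    and "norm (gen_sol S K a (bd y) (bd (A (u t))) k - u t) \<le> (M * E + 2 * M * B + 2 * B) * k"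
proof -
  have D: "u t \<in> DA" "A (u t) \<in> DA" "f t (u t) \<in> DA" using in_domain[OF t] by auto
  have "y \<in> DA"
    using D linear_on_subspace[OF A_linear] by (auto simp: y_def intro: subspace_add subspace_scale)
  moreover have "A y - A (u t) = (k / 2) *\<^sub>R A (f t (u t))"
    using D linear_on_subspace[OF A_linear]
    by (simp add: y_def linear_onD[OF A_linear] subspace_scale)
  ultimately have "norm (?w - y - k *\<^sub>R A (u t))
      \<le> M * norm (a - y) + k * (M * (k / 2 * norm (A (f t (u t)))) + M * norm (A (A (u t))) * k)"
    using norm_gen_sol_minus_affine_le[of y "A (u t)" k a] D(2) k by simp
  also have "\<dots> \<le> M * (E * k\<^sup>2) + k * (M * (k * B) + M * B * k)"
    using A_bounded[OF t] a k M_pos B_nonneg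
    by (intro add_mono mult_left_mono mult_mono) auto
  finally show middle: "norm (?w - y - k *\<^sub>R A (u t)) \<le> (M * E + 2 * M * B) * k\<^sup>2"
    by (simp add: power2_eq_square algebra_simps)
  have "?w - u t = (?w - y - k *\<^sub>R A (u t)) + (k / 2) *\<^sub>R f t (u t) + k *\<^sub>R A (u t)"
    by (simp add: y_def)
  then have "norm (?w - u t)
      \<le> norm (?w - y - k *\<^sub>R A (u t)) + norm ((k / 2) *\<^sub>R f t (u t)) + norm (k *\<^sub>R A (u t))"
    by (metis norm_triangle_le add_mono[OF norm_triangle_ineq order_refl])
  also have "\<dots> \<le> (M * E + 2 * M * B) * k + k * B + k * B"
  proof (intro add_mono)
    have "k\<^sup>2 \<le> k" using k by (simp add: power2_eq_square mult_left_le)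
    then show "norm (?w - y - k *\<^sub>R A (u t)) \<le> (M * E + 2 * M * B) * k"
      using middle \<open>E \<ge> 0\<close> B_nonneg M_pos by (smt (verit) mult_left_mono mult_nonneg_nonneg)
  qed (use f_bounded[OF t] A_bounded[OF t] k B_nonneg in \<open>auto intro: mult_mono\<close>)
  finally show "norm (?w - u t) \<le> (M * E + 2 * M * B + 2 * B) * k"
    by (simp add: algebra_simps)
qed

lemma strang_step_error:
  fixes t k C :: real and Psi :: "real \<Rightarrow> real \<Rightarrow> 'x \<Rightarrow> 'x"
  defines "E \<equiv> \<bar>C\<bar> + L * (1 + B + L * e)"
  defines "c3 \<equiv> M * E + 2 * M * B + 2 * B"
  defines "y \<equiv> u t + (k / 2) *\<^sub>R f t (u t)"
  defines "w \<equiv> gen_sol S K (Psi (k / 2) t (u t)) (bd y) (bd (A (u t))) k"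
  assumes "p \<ge> 1" and t: "t \<ge> 0" "t + k \<le> T" and k: "0 < k" "k \<le> 1"
    and small: "(B + L * e) * k < e" "(1 + c3) * k < e / 2"
    and order: "order_step f Psi p C (k / 2) t (u t)" "order_step f Psi p C (k / 2) (t + k / 2) w"
  shows "norm (Psi (k / 2) (t + k / 2) w - u (t + k))
    \<le> (E + L * (1 + c3) + (M * E + 2 * M * B) + B) * k\<^sup>2"
proof -
  have t0T: "t \<in> {0..T}" using t k by auto
  have "E \<ge> 0" "c3 \<ge> 0" using B_nonneg L_nonneg e_pos M_pos by (simp_all add: E_def c3_def)
  have h: "0 < k / 2" "k / 2 \<le> 1" "(k / 2)\<^sup>2 \<le> k\<^sup>2" using k by (simp_all add: power_mono)
  have "norm (Psi (k / 2) t (u t) - u t - (k / 2) *\<^sub>R f t (u t)) \<le> E * (k / 2)\<^sup>2 + L * 0 * (k / 2)"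
    unfolding E_def using order(1) \<open>p \<ge> 1\<close> t0T t h small mult_nonneg_nonneg[OF \<open>c3 \<ge> 0\<close>, of k]
    by (intro half_step_error) (auto simp: algebra_simps)
  also have "\<dots> \<le> E * k\<^sup>2" using h \<open>E \<ge> 0\<close> by (simp add: mult_left_mono)
  finally have "norm (Psi (k / 2) t (u t) - y) \<le> E * k\<^sup>2" by (simp add: y_def algebra_simps)
  then have middle: "norm (w - y - k *\<^sub>R A (u t)) \<le> (M * E + 2 * M * B) * k\<^sup>2"
    and near: "norm (w - u t) \<le> c3 * k"
    using semigroup_step_error[OF t0T k _ \<open>E \<ge> 0\<close>] by (simp_all add: w_def y_def c3_def)
  have "norm (Psi (k / 2) (t + k / 2) w - w - (k / 2) *\<^sub>R f t (u t))
      \<le> E * (k / 2)\<^sup>2 + L * (k / 2 + c3 * k) * (k / 2)"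
    unfolding E_def using order(2) \<open>p \<ge> 1\<close> t0T t h small near
    by (intro half_step_error) (auto simp: algebra_simps)
  also have "\<dots> \<le> E * k\<^sup>2 + L * (k + c3 * k) * k"
    using h k \<open>E \<ge> 0\<close> \<open>c3 \<ge> 0\<close> L_nonneg by (intro add_mono mult_left_mono mult_mono) auto
  finally have second: "norm (Psi (k / 2) (t + k / 2) w - w - (k / 2) *\<^sub>R f t (u t))
      \<le> (E + L * (1 + c3)) * k\<^sup>2"
    by (simp add: power2_eq_square algebra_simps)
  have "Psi (k / 2) (t + k / 2) w - u (t + k)
      = (Psi (k / 2) (t + k / 2) w - w - (k / 2) *\<^sub>R f t (u t))
      + (w - y - k *\<^sub>R A (u t)) - (u (t + k) - u t - k *\<^sub>R (A (u t) + f t (u t)))"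
    by (simp add: y_def algebra_simps scaleR_add_left[symmetric])
  then have "norm (Psi (k / 2) (t + k / 2) w - u (t + k))
      \<le> norm (Psi (k / 2) (t + k / 2) w - w - (k / 2) *\<^sub>R f t (u t)) + norm (w - y - k *\<^sub>R A (u t))
        + norm (u (t + k) - u t - k *\<^sub>R (A (u t) + f t (u t)))"
    by (metis norm_triangle_le_diff norm_triangle_le add_mono order_refl norm_triangle_ineq)
  also have "\<dots> \<le> (E + L * (1 + c3)) * k\<^sup>2 + (M * E + 2 * M * B) * k\<^sup>2 + B * k\<^sup>2"
    using second middle taylor[OF t0T, of k] k(1) t(2) by (intro add_mono) auto
  finally show ?thesis by (simp add: algebra_simps)
qed

lemma local_error_uniform:
  assumes "p \<ge> 1"
  obtains k0 c where "k0 > 0"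
    "\<And>t k. 0 < k \<Longrightarrow> k \<le> k0 \<Longrightarrow> t \<ge> 0 \<Longrightarrow> t + k \<le> T \<Longrightarrow>
      order_step f Psi p C (k / 2) t (u t) \<Longrightarrow>
      order_step f Psi p C (k / 2) (t + k / 2) (gen_sol S K (Psi (k / 2) t (u t))
        (bd (u t + (k / 2) *\<^sub>R f t (u t))) (bd (A (u t))) k) \<Longrightarrow>
      norm (Psi (k / 2) (t + k / 2) (gen_sol S K (Psi (k / 2) t (u t))
        (bd (u t + (k / 2) *\<^sub>R f t (u t))) (bd (A (u t))) k) - u (t + k)) \<le> c * k\<^sup>2"
proof -
  define E where "E = \<bar>C\<bar> + L * (1 + B + L * e)"
  define c3 where "c3 = M * E + 2 * M * B + 2 * B"
  define D where "D = 1 + c3 + B + L * e"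
  have "c3 \<ge> 0" "L * e \<ge> 0" using B_nonneg L_nonneg e_pos M_pos by (simp_all add: c3_def E_def)
  then have "D > 0" using B_nonneg unfolding D_def by linarith
  show ?thesis
  proof (rule that)
    show "min 1 (e / (4 * D)) > 0" using \<open>D > 0\<close> e_pos by simp
    fix t k assume k: "0 < k" "k \<le> min 1 (e / (4 * D))" and t: "t \<ge> 0" "t + k \<le> T"
    then have "D * k \<le> e / 4" using \<open>D > 0\<close> by (simp add: pos_le_divide_eq algebra_simps)
    moreover have "0 \<le> (B + L * e) * k" "0 \<le> c3 * k"
      using B_nonneg L_nonneg e_pos M_pos k(1) by (simp_all add: c3_def E_def)
    ultimately have "(B + L * e) * k < e" "(1 + c3) * k < e / 2"
      using e_pos k(1) unfolding D_def by (simp_all add: algebra_simps)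
    then show "norm (Psi (k / 2) (t + k / 2) (gen_sol S K (Psi (k / 2) t (u t))
        (bd (u t + (k / 2) *\<^sub>R f t (u t))) (bd (A (u t))) k) - u (t + k))
      \<le> (E + L * (1 + c3) + (M * E + 2 * M * B) + B) * k\<^sup>2"
      if "order_step f Psi p C (k / 2) t (u t)"
        "order_step f Psi p C (k / 2) (t + k / 2) (gen_sol S K (Psi (k / 2) t (u t))
          (bd (u t + (k / 2) *\<^sub>R f t (u t))) (bd (A (u t))) k)"
      using strang_step_error[OF \<open>p \<ge> 1\<close> t k(1) _ _ _ that] k unfolding E_def c3_def by simp
  qed
qed

lemma local_error:
  assumes "p \<ge> 1"
    and order: "\<exists>C k0. k0 > 0 \<and> (\<forall>k n. 0 < k \<longrightarrow> k \<le> k0 \<longrightarrow> real (Suc n) * k \<le> T \<longrightarrow>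
        (let tn = real n * k;
             wbar = gen_sol S K (Psi (k / 2) tn (u tn))
                      (bd (u tn + (k / 2) *\<^sub>R f tn (u tn))) (bd (A (u tn)))
         in order_step f Psi p C (k / 2) tn (u tn)
            \<and> order_step f Psi p C (k / 2) (tn + k / 2) (wbar k)))"
  shows "\<exists>C k0. k0 > 0 \<and> (\<forall>k n. 0 < k \<longrightarrow> k \<le> k0 \<longrightarrow> real (Suc n) * k \<le> T \<longrightarrow>
        (let tn = real n * k;
             wbar = gen_sol S K (Psi (k / 2) tn (u tn))
                      (bd (u tn + (k / 2) *\<^sub>R f tn (u tn))) (bd (A (u tn)))
         in norm (Psi (k / 2) (tn + k / 2) (wbar k) - u (real (Suc n) * k)) \<le> C * k ^ 2))"
proof -
  obtain C k1 where "k1 > 0" and order_steps: "\<forall>k n. 0 < k \<longrightarrow> k \<le> k1 \<longrightarrow> real (Suc n) * k \<le> T \<longrightarrow>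
      order_step f Psi p C (k / 2) (real n * k) (u (real n * k)) \<and>
      order_step f Psi p C (k / 2) (real n * k + k / 2) (gen_sol S K (Psi (k / 2) (real n * k)
        (u (real n * k))) (bd (u (real n * k) + (k / 2) *\<^sub>R f (real n * k) (u (real n * k))))
        (bd (A (u (real n * k)))) k)"
    using order unfolding Let_def by blast
  obtain k0 c where "k0 > 0" and error: "\<And>t k. 0 < k \<Longrightarrow> k \<le> k0 \<Longrightarrow> t \<ge> 0 \<Longrightarrow> t + k \<le> T \<Longrightarrow>
      order_step f Psi p C (k / 2) t (u t) \<Longrightarrow>
      order_step f Psi p C (k / 2) (t + k / 2) (gen_sol S K (Psi (k / 2) t (u t))
        (bd (u t + (k / 2) *\<^sub>R f t (u t))) (bd (A (u t))) k) \<Longrightarrow>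
      norm (Psi (k / 2) (t + k / 2) (gen_sol S K (Psi (k / 2) t (u t))
        (bd (u t + (k / 2) *\<^sub>R f t (u t))) (bd (A (u t))) k) - u (t + k)) \<le> c * k\<^sup>2"
    using local_error_uniform[OF \<open>p \<ge> 1\<close>, where Psi=Psi and C=C] by blast
  have "norm (Psi (k / 2) (real n * k + k / 2) (gen_sol S K (Psi (k / 2) (real n * k)
      (u (real n * k))) (bd (u (real n * k) + (k / 2) *\<^sub>R f (real n * k) (u (real n * k))))
      (bd (A (u (real n * k)))) k) - u (real (Suc n) * k)) \<le> c * k\<^sup>2"
    if "0 < k" "k \<le> min k0 k1" "real (Suc n) * k \<le> T" for k n
    using that order_steps error[of k "real n * k"] by (simp add: algebra_simps)
  then show ?thesis
    using \<open>k0 > 0\<close> \<open>k1 > 0\<close> by (intro exI[of _ c] exI[of _ "min k0 k1"]) (simp add: Let_def)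
qed

end

lemma (in boundary_semigroup) strang_data_exists:
  assumes "T > 0"
    and u_deriv: "\<forall>t\<in>{0..T}. u t \<in> DA \<and>
      (u has_vector_derivative (A (u t) + f t (u t))) (at t within {0..T}) \<and> bd (u t) = g t"
    and u_C2: "\<exists>u'. (\<forall>t\<in>{0..T}. (u has_vector_derivative u' t) (at t within {0..T}))
      \<and> C1_on {0..T} u'"
    and in_domain: "\<forall>t\<in>{0..T}. u t \<in> DA \<and> A (u t) \<in> DA" "\<forall>t\<in>{0..T}. f t (u t) \<in> DA"
    and cont: "C1_on {0..T} (\<lambda>t. A (u t))" "C1_on {0..T} (\<lambda>t. A (A (u t)))"
      "continuous_on {0..T} (\<lambda>t. A (f t (u t)))"
    and f_C1: "\<exists>f'. (\<forall>q\<in>{0..T} \<times> UNIV.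
      ((\<lambda>(t, x). f t x) has_derivative blinfun_apply (f' q)) (at q within {0..T} \<times> UNIV))
      \<and> continuous_on ({0..T} \<times> UNIV) f'"
  obtains e L B where "strang_data S M A DA bd K f u T e L B"
proof -
  have u': "(u has_vector_derivative A (u t) + f t (u t)) (at t within {0..T})"
    if "t \<in> {0..T}" for t using u_deriv that by blast
  obtain B where "B \<ge> 0" and bounds: "\<And>t. t \<in> {0..T} \<Longrightarrow> norm (f t (u t)) \<le> B
      \<and> norm (A (u t)) \<le> B \<and> norm (A (A (u t))) \<le> B \<and> norm (A (f t (u t))) \<le> B"
    and taylor: "\<And>t k. t \<in> {0..T} \<Longrightarrow> 0 \<le> k \<Longrightarrow> t + k \<le> T \<Longrightarrow>
      norm (u (t + k) - u t - k *\<^sub>R (A (u t) + f t (u t))) \<le> B * k\<^sup>2"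
    using C2_solution_bounds[where A=A and f=f and u=u and T=T, OF \<open>T > 0\<close> u' u_C2
        C1_on_imp_continuous_on[OF cont(1)] C1_on_imp_continuous_on[OF cont(2)] cont(3)]
    by metis
  obtain f' where f': "\<forall>q\<in>{0..T} \<times> UNIV.
      ((\<lambda>(t, x). f t x) has_derivative blinfun_apply (f' q)) (at q within {0..T} \<times> UNIV)"
    and "continuous_on ({0..T} \<times> UNIV) f'" using f_C1 by blast
  moreover have "continuous_on {0..T} u"
    unfolding continuous_on_eq_continuous_within
    using u_deriv has_vector_derivative_continuous by blast
  ultimately obtain e L where "e > 0" "L \<ge> 0" and lipschitz: "\<And>t \<tau> x. t \<in> {0..T} \<Longrightarrow>
      \<tau> \<in> {0..T} \<Longrightarrow> \<bar>\<tau> - t\<bar> + norm (x - u t) < e \<Longrightarrow>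
      norm (f \<tau> x - f t (u t)) \<le> L * (\<bar>\<tau> - t\<bar> + norm (x - u t))"
    using C1_lipschitz_near_curve[OF f'[rule_format]] by blast
  have "strang_data S M A DA bd K f u T e L B"
    using \<open>e > 0\<close> \<open>L \<ge> 0\<close> lipschitz bounds taylor in_domain \<open>B \<ge> 0\<close>
    by unfold_locales auto
  then show ?thesis by (rule that)
qed

theorem theorem4p2:
  fixes A :: "'x::banach \<Rightarrow> 'x" and DA :: "'x set"
    and bd :: "'x \<Rightarrow> 'y::banach"
    and S :: "real \<Rightarrow> 'x \<Rightarrow> 'x" and \<omega> :: real
    and K :: "real \<Rightarrow> 'y \<Rightarrow> 'x"
    and f :: "real \<Rightarrow> 'x \<Rightarrow> 'x" and g :: "real \<Rightarrow> 'y"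
    and u :: "real \<Rightarrow> 'x" and T :: real
    and Psi :: "real \<Rightarrow> real \<Rightarrow> 'x \<Rightarrow> 'x" and p :: nat
  assumes T_pos: "T > 0"
    and A_lin: "linear_on DA A" and bd_lin: "linear_on DA bd"
    and A1: "bd ` DA = UNIV"
    and A2_dense: "closure {x \<in> DA. bd x = 0} = UNIV"
    and A2_gen: "generates {x \<in> DA. bd x = 0} A S"
    and A2_type: "negative_type S \<omega>"
    and A3_sol: "\<forall>z>\<omega>. \<forall>v. K z v \<in> DA \<and> A (K z v) = z *\<^sub>R K z v \<and> bd (K z v) = v"
    and A3_uniq: "\<forall>z>\<omega>. \<forall>v. \<forall>x\<in>DA. A x = z *\<^sub>R x \<and> bd x = v \<longrightarrow> x = K z v"
    and A3_bound: "\<forall>\<omega>0>\<omega>. \<exists>C. \<forall>z\<ge>\<omega>0. \<forall>v. norm (K z v) \<le> C * norm v"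
    and A4: "\<exists>f'. (\<forall>q\<in>{0..T} \<times> UNIV.
               ((\<lambda>(t, x). f t x) has_derivative blinfun_apply (f' q)) (at q within {0..T} \<times> UNIV))
             \<and> continuous_on ({0..T} \<times> UNIV) f'"
    and u_sol: "\<forall>t\<in>{0..T}. u t \<in> DA \<and>
                 (u has_vector_derivative (A (u t) + f t (u t))) (at t within {0..T}) \<and>
                 bd (u t) = g t"
    and A5_C2: "\<exists>u'. (\<forall>t\<in>{0..T}. (u has_vector_derivative u' t) (at t within {0..T}))
                    \<and> C1_on {0..T} u'"
    and A5_dom: "\<forall>t\<in>{0..T}. u t \<in> DA \<and> A (u t) \<in> DA"
    and A5_C1: "C1_on {0..T} (\<lambda>t. A (u t))" "C1_on {0..T} (\<lambda>t. A (A (u t)))"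
    and A6: "\<forall>t\<in>{0..T}. f t (u t) \<in> DA" "continuous_on {0..T} (\<lambda>t. A (f t (u t)))"
    and p_ge: "p \<ge> 1"
    and order: "\<exists>C k0. k0 > 0 \<and> (\<forall>k n. 0 < k \<longrightarrow> k \<le> k0 \<longrightarrow> real (Suc n) * k \<le> T \<longrightarrow>
        (let tn = real n * k;
             wbar = gen_sol S K (Psi (k / 2) tn (u tn))
                      (bd (u tn + (k / 2) *\<^sub>R f tn (u tn))) (bd (A (u tn)))
         in order_step f Psi p C (k / 2) tn (u tn)
            \<and> order_step f Psi p C (k / 2) (tn + k / 2) (wbar k)))"
  shows "\<exists>C k0. k0 > 0 \<and> (\<forall>k n. 0 < k \<longrightarrow> k \<le> k0 \<longrightarrow> real (Suc n) * k \<le> T \<longrightarrow>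
        (let tn = real n * k;
             wbar = gen_sol S K (Psi (k / 2) tn (u tn))
                      (bd (u tn + (k / 2) *\<^sub>R f tn (u tn))) (bd (A (u tn)))
         in norm (Psi (k / 2) (tn + k / 2) (wbar k) - u (real (Suc n) * k)) \<le> C * k ^ 2))"
proof -
  have "\<omega> < 0" using A2_type by (simp add: negative_type_def)
  obtain M where "bounded_C0_semigroup S M"
    using negative_type_imp_bounded_C0_semigroup A2_gen A2_type by (auto simp: generates_def)
  then interpret boundary_semigroup S M A DA bd K
    using A_lin bd_lin A2_gen A3_sol A3_uniq \<open>\<omega> < 0\<close>
    by unfold_locales (auto simp: bounded_C0_semigroup_def)
  obtain e L B where "strang_data S M A DA bd K f u T e L B"
    using strang_data_exists[OF T_pos u_sol A5_C2 A5_dom A6(1) A5_C1 A6(2) A4] .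
  then interpret strang_data S M A DA bd K f u T e L B .
  show ?thesis using local_error[OF p_ge order] .
qed

end
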